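(* Let $X\subseteq\mathbb{R}^k$ be a set of feasible alternatives, $\mathbf{f}=(f_1,f_2):X\to\mathbb{R}^2$ a vector criterion and $Y=\mathbf{f}(X)$. Consider three decision makers $DM_1,DM_2,DM_3$ whose preference relations $\succ_1,\succ_2,\succ_3$ on $\mathbb{R}^2$ are cone relations with cones $K_1,K_2,K_3$, each $K_l$ being a convex pointed cone with $\mathbb{R}^2_+\subseteq K_l$ and $\mathbf{0}_2\notin K_l$. Suppose that vectors $$\mathbf{y}^{(l)}=\begin{pmatrix} w_1^{(l)}\\ -w_2^{(l)}\end{pmatrix},\qquad w_1^{(l)}>0,\ w_2^{(l)}>0,\qquad l=1,2,3,$$ are given with $\mathbf{y}^{(1)}\succ_1\mathbf{0}_2$, $\mathbf{y}^{(2)}\succ_2\mathbf{0}_2$, $\mathbf{y}^{(3)}\succ_3\mathbf{0}_2$, and that no two of these vectors are codirectional. Put $W(l,s)=w_1^{(l)}w_2^{(s)}-w_2^{(l)}w_1^{(s)}$. Then there is exactly one index $s\in\{1,2,3\}$ such that $W(l,s)>0$ and $W(s,k)>0$ for some indices $l,k\in\{1,2,3\}$ with $l\neq k$, $l\neq s$, $k\neq s$; and for this $s$, defining the vector criterion $\mathbf{g}=(g_1,g_2)$ on $X$ by $g_1=f_1$, $g_2=w_2^{(s)}f_1+w_1^{(s)}f_2$, we have $\hat P_{\mathbf{g}}(Y)\subseteq P(Y)$, where $\hat P_{\mathbf{g}}(Y)=\mathbf{f}(P_{\mathbf{g}}(X))$.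
   Context: For $\mathbf{a},\mathbf{b}\in\mathbb{R}^m$, $\mathbf{a}\geq\mathbf{b}$ means $a_i\ge b_i$ for all $i$ and $\mathbf{a}\neq\mathbf{b}$ (Pareto relation); $\mathbb{R}^m_+=\{\mathbf{y}\in\mathbb{R}^m:\mathbf{y}\geq\mathbf{0}_m\}$ (nonnegative orthant without the origin). A binary relation $\mathfrak{R}$ on $\mathbb{R}^m$ is a cone relation with cone $K$ if $\mathbf{y}^{(1)}\mathfrak{R}\,\mathbf{y}^{(2)}\iff \mathbf{y}^{(1)}-\mathbf{y}^{(2)}\in K$ for all $\mathbf{y}^{(1)},\mathbf{y}^{(2)}\in\mathbb{R}^m$. The Pareto set is $P(Y)=\{\mathbf{y}^*\in Y:\ \nexists\,\mathbf{y}\in Y,\ \mathbf{y}\geq\mathbf{y}^*\}$, and for a vector criterion $\mathbf{g}$ on $X$, $P_{\mathbf{g}}(X)=\{\mathbf{x}^*\in X:\ \nexists\,\mathbf{x}\in X,\ \mathbf{g}(\mathbf{x})\geq\mathbf{g}(\mathbf{x}^* )\}$. Two vectors are codirectional if one is a positive multiple of the other. *)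

theory Defs
  imports "HOL-Analysis.Analysis"
begin

definition pareto_ge :: "real \<times> real \<Rightarrow> real \<times> real \<Rightarrow> bool" where
  "pareto_ge a b \<longleftrightarrow> fst a \<ge> fst b \<and> snd a \<ge> snd b \<and> a \<noteq> b"

definition nonneg_orthant :: "(real \<times> real) set" where
  "nonneg_orthant = {y. pareto_ge y 0}"

definition is_cone_relation :: "(real \<times> real \<Rightarrow> real \<times> real \<Rightarrow> bool) \<Rightarrow> (real \<times> real) set \<Rightarrow> bool" where
  "is_cone_relation R K \<longleftrightarrow> (\<forall>y1 y2. R y1 y2 \<longleftrightarrow> y1 - y2 \<in> K)"

text \<open>Cone in the sense of the paper: closed under multiplication by positive scalars
  (the origin is excluded separately by hypothesis).\<close>
definition pos_cone :: "(real \<times> real) set \<Rightarrow> bool" where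
  "pos_cone K \<longleftrightarrow> (\<forall>y\<in>K. \<forall>c::real. c > 0 \<longrightarrow> c *\<^sub>R y \<in> K)"

definition pointed :: "(real \<times> real) set \<Rightarrow> bool" where
  "pointed K \<longleftrightarrow> (\<forall>y\<in>K. - y \<notin> K)"

definition codirectional :: "real \<times> real \<Rightarrow> real \<times> real \<Rightarrow> bool" where
  "codirectional a b \<longleftrightarrow> (\<exists>c::real. c > 0 \<and> a = c *\<^sub>R b)"

definition pareto_set :: "(real \<times> real) set \<Rightarrow> (real \<times> real) set" where
  "pareto_set Y = {y \<in> Y. \<not> (\<exists>y'\<in>Y. pareto_ge y' y)}"

definition pareto_set_crit :: "('a \<Rightarrow> real \<times> real) \<Rightarrow> 'a set \<Rightarrow> 'a set" where
  "pareto_set_crit g X = {x \<in> X. \<not> (\<exists>x'\<in>X. pareto_ge (g x') (g x))}"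

end

theory Submission
  imports Defs
begin

text \<open>Dividing by the positive number w1(l) w1(s) shows that W(l,s) > 0 means that the slope
  w2/w1 of vector l is smaller than that of vector s, and non-codirectionality makes the three
  slopes distinct; so the index s in question is the unique vector of middle slope.
  The inclusion holds for any weights w2 \<ge> 0 < w1, since (y1, y2) \<mapsto> (y1, w2 y1 + w1 y2)
  maps Pareto domination to Pareto domination.\<close>

lemma three_values_unique_middle:
  fixes r :: "nat \<Rightarrow> 'b::linorder"
  assumes "r 1 \<noteq> r 2" "r 1 \<noteq> r 3" "r 2 \<noteq> r 3"
  shows "\<exists>!s. s \<in> {1,2,3} \<and> (\<exists>l\<in>{1,2,3}. \<exists>k\<in>{1,2,3}. r l < r s \<and> r s < r k)"
proof (rule ex_ex1I)
  show "\<exists>s. s \<in> {1,2,3} \<and> (\<exists>l\<in>{1,2,3}. \<exists>k\<in>{1,2,3}. r l < r s \<and> r s < r k)"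
    using assms by (simp add: neq_iff) (metis less_trans neq_iff)
next
  fix s t
  assume "s \<in> {1,2,3} \<and> (\<exists>l\<in>{1,2,3}. \<exists>k\<in>{1,2,3}. r l < r s \<and> r s < r k)"
    and "t \<in> {1,2,3} \<and> (\<exists>l\<in>{1,2,3}. \<exists>k\<in>{1,2,3}. r l < r t \<and> r t < r k)"
  then show "s = t" by auto
qed

lemma cross_pos_iff_slope_less:
  fixes a1 a2 b1 b2 :: real
  assumes "a1 > 0" "b1 > 0"
  shows "0 < a1 * b2 - a2 * b1 \<longleftrightarrow> a2 / a1 < b2 / b1"
  using assms by (simp add: divide_less_eq less_divide_eq field_simps)

lemma codirectional_if_slope_eq:
  fixes a1 a2 b1 b2 :: real
  assumes "a1 > 0" "b1 > 0" "a2 / a1 = b2 / b1"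
  shows "codirectional (a1, - a2) (b1, - b2)"
proof -
  have "a2 = (a1 / b1) * b2" using assms by (simp add: field_simps)
  then have "(a1, - a2) = (a1 / b1) *\<^sub>R (b1, - b2)" using assms by simp
  then show ?thesis
    unfolding codirectional_def using assms by (intro exI[of _ "a1 / b1"]) auto
qed

lemma pareto_ge_linear_transform:
  fixes a b :: real
  assumes "a \<ge> 0" "b > 0" and "pareto_ge p q"
  shows "pareto_ge (fst p, a * fst p + b * snd p) (fst q, a * fst q + b * snd q)"
proof -
  have fst_le: "fst q \<le> fst p" and snd_le: "snd q \<le> snd p" and neq: "p \<noteq> q"
    using assms(3) unfolding pareto_ge_def by auto
  have "a * fst q \<le> a * fst p" "b * snd q \<le> b * snd p"
    using fst_le snd_le assms(1,2) by (simp_all add: mult_left_mono)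
  moreover have "fst p = fst q \<Longrightarrow> b * snd q < b * snd p"
    using neq snd_le assms(2) by (simp add: prod_eq_iff)
  ultimately show ?thesis
    unfolding pareto_ge_def using fst_le by (auto simp: prod_eq_iff)
qed

lemma pareto_set_crit_linear_transform_subset:
  fixes f :: "'a \<Rightarrow> real \<times> real" and a b :: real
  assumes "a \<ge> 0" "b > 0"
  shows "f ` pareto_set_crit (\<lambda>x. (fst (f x), a * fst (f x) + b * snd (f x))) X
           \<subseteq> pareto_set (f ` X)"
  using pareto_ge_linear_transform[OF assms]
  unfolding pareto_set_crit_def pareto_set_def by blast

theorem theorem1:
  fixes X :: "(real ^ 'k) set"
    and f :: "real ^ 'k \<Rightarrow> real \<times> real"
    and R :: "nat \<Rightarrow> (real \<times> real \<Rightarrow> real \<times> real \<Rightarrow> bool)"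
    and K :: "nat \<Rightarrow> (real \<times> real) set"
    and w1 w2 :: "nat \<Rightarrow> real"
  assumes cone_rel: "\<And>l. l \<in> {1,2,3} \<Longrightarrow> is_cone_relation (R l) (K l)"
    and K_convex: "\<And>l. l \<in> {1,2,3} \<Longrightarrow> convex (K l)"
    and K_cone: "\<And>l. l \<in> {1,2,3} \<Longrightarrow> pos_cone (K l)"
    and K_pointed: "\<And>l. l \<in> {1,2,3} \<Longrightarrow> pointed (K l)"
    and K_orthant: "\<And>l. l \<in> {1,2,3} \<Longrightarrow> nonneg_orthant \<subseteq> K l"
    and K_zero: "\<And>l. l \<in> {1,2,3} \<Longrightarrow> (0::real \<times> real) \<notin> K l"
    and w_pos: "\<And>l. l \<in> {1,2,3} \<Longrightarrow> w1 l > 0 \<and> w2 l > 0"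
    and y_pref: "\<And>l. l \<in> {1,2,3} \<Longrightarrow> R l (w1 l, - w2 l) 0"
    and noncodir: "\<And>l s. l \<in> {1,2,3} \<Longrightarrow> s \<in> {1,2,3} \<Longrightarrow> l \<noteq> s \<Longrightarrow>
                     \<not> codirectional (w1 l, - w2 l) (w1 s, - w2 s)"
  shows "let W = (\<lambda>l s. w1 l * w2 s - w2 l * w1 s);
             Q = (\<lambda>s. s \<in> {1,2,3} \<and> (\<exists>l k. l \<in> {1,2,3} \<and> k \<in> {1,2,3} \<and>
                    l \<noteq> k \<and> l \<noteq> s \<and> k \<noteq> s \<and> W l s > 0 \<and> W s k > 0))
         in (\<exists>!s. Q s) \<and>
            (\<forall>s. Q s \<longrightarrow>
               (let g = (\<lambda>x. (fst (f x), w2 s * fst (f x) + w1 s * snd (f x)))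
                in f ` pareto_set_crit g X \<subseteq> pareto_set (f ` X)))"
proof -
  define slope where "slope l = w2 l / w1 l" for l
  have W_pos_iff: "0 < w1 l * w2 s - w2 l * w1 s \<longleftrightarrow> slope l < slope s"
    if "l \<in> {1,2,3}" "s \<in> {1,2,3}" for l s
    unfolding slope_def using cross_pos_iff_slope_less w_pos that by blast
  have slopes_distinct: "slope l \<noteq> slope s" if "l \<in> {1,2,3}" "s \<in> {1,2,3}" "l \<noteq> s" for l s
    unfolding slope_def using codirectional_if_slope_eq noncodir w_pos that by blast
  define middle where "middle s \<longleftrightarrow> s \<in> {1,2,3} \<and>
    (\<exists>l\<in>{1,2,3}. \<exists>k\<in>{1,2,3}. slope l < slope s \<and> slope s < slope k)" for s
  have Q_iff_middle: "(s \<in> {1,2,3} \<and> (\<exists>l k. l \<in> {1,2,3} \<and> k \<in> {1,2,3} \<and>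
      l \<noteq> k \<and> l \<noteq> s \<and> k \<noteq> s \<and>
      0 < w1 l * w2 s - w2 l * w1 s \<and> 0 < w1 s * w2 k - w2 s * w1 k)) \<longleftrightarrow> middle s" for s
    unfolding middle_def using W_pos_iff by (metis less_irrefl less_trans)
  have "\<exists>!s. middle s"
    unfolding middle_def using slopes_distinct by (intro three_values_unique_middle) auto
  moreover have "f ` pareto_set_crit (\<lambda>x. (fst (f x), w2 s * fst (f x) + w1 s * snd (f x))) X
      \<subseteq> pareto_set (f ` X)" if "middle s" for s
    using w_pos[of s] that unfolding middle_def
    by (intro pareto_set_crit_linear_transform_subset) auto
  ultimately show ?thesis
    unfolding Let_def Q_iff_middle by blast
qed

end
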